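(* Let $1<p<\infty$, $N\ge1$, $0\le R_1<R_2<\infty$, and let $f$ satisfy: $(f_{\mathrm{reg}})$ $f\in C([0,\infty))\cap C^1((0,\infty))$; $(f_{\mathrm{eq}})$ $f(0)=f(1)=0$, $f(s)<0$ for $0<s<1$, $f(s)>0$ for $s>1$; $(f_0)$ there exists $C_0\in[0,\infty)$ with $\lim_{s\to0^+}f(s)/s^{p-1}=-C_0$; $(f_1)$ there exists $C_1\in[0,\infty]$ with $\lim_{s\to1}\frac{f(s)}{|s-1|^{p-2}(s-1)}=C_1$. Define $\hat f(s)=f(s)$ for $s\ge0$ and $\hat f(s)=0$ for $s<0$, and $\varphi_p(s)=|s|^{p-2}s$. Let $u$ be a solution of $$-\big(r^{N-1}\varphi_p(u')\big)'=r^{N-1}\hat f(u)\ \text{in }(R_1,R_2),\qquad u'(R_1)=u'(R_2)=0.$$ Then either $u\equiv -C$ for some constant $C\ge0$, or $u(r)>0$ for every $r\in[R_1,R_2]$.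
   Context: A solution means a function $u$ such that $u$ and $r^{N-1}\varphi_p(u')$ belong to $C^1([R_1,R_2])$ and the equation holds pointwise, together with the boundary conditions. *)

theory Defs
  imports "HOL-Analysis.Analysis"
begin

definition phi_p :: "real \<Rightarrow> real \<Rightarrow> real" where
  "phi_p p s = \<bar>s\<bar> powr (p - 2) * s"

definition fhat :: "(real \<Rightarrow> real) \<Rightarrow> real \<Rightarrow> real" where
  "fhat f s = (if s \<ge> 0 then f s else 0)"

definition radial_solution ::
  "real \<Rightarrow> nat \<Rightarrow> (real \<Rightarrow> real) \<Rightarrow> real \<Rightarrow> real \<Rightarrow> (real \<Rightarrow> real) \<Rightarrow> bool" where
  "radial_solution p N f R1 R2 u \<longleftrightarrow>
     (\<exists>u' w'.
        (\<forall>r\<in>{R1..R2}. (u has_real_derivative u' r) (at r within {R1..R2})) \<and>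
        continuous_on {R1..R2} u' \<and>
        (\<forall>r\<in>{R1..R2}. ((\<lambda>t. t ^ (N - 1) * phi_p p (u' t)) has_real_derivative w' r)
                            (at r within {R1..R2})) \<and>
        continuous_on {R1..R2} w' \<and>
        (\<forall>r\<in>{R1<..<R2}. - w' r = r ^ (N - 1) * fhat f (u r)) \<and>
        u' R1 = 0 \<and> u' R2 = 0)"

end

theory Submission
  imports Defs
begin

text \<open>Let \<open>W = r^(N-1) \<phi>_p(u')\<close> be the flux. At a minimum point of \<open>u\<close> we have \<open>u' = 0\<close>, so if
  the minimum is not positive, the set where \<open>u \<le> 0\<close> and \<open>W = 0\<close> is nonempty; it is closed, and
  it is open, hence all of \<open>[R1, R2]\<close>, so that \<open>u' = 0\<close> and \<open>u\<close> is a nonpositive constant.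
  Where \<open>u < 0\<close> the equation reads \<open>W' = 0\<close>. Where \<open>u = 0\<close>, the bound \<open>0 \<le> -f(s) \<le> C s^(p-1)\<close>
  for small \<open>s \<ge> 0\<close> makes \<open>W\<close> increasing, hence \<open>u\<close> nonnegative and monotone on either side, and
  integrating \<open>W'\<close> gives \<open>|u'|^(p-1) \<le> K u^(p-1)\<close>. The powers cancel, and Gronwall's inequality
  for \<open>|u'| \<le> K u\<close>, started from \<open>u = 0\<close>, forces \<open>u = 0\<close> nearby.\<close>

lemma phi_p_nonneg_eq: "0 \<le> x \<Longrightarrow> phi_p p x = x powr (p - 1)"
  by (cases "x = 0") (auto simp: phi_p_def powr_diff powr_minus_divide divide_simps power2_eq_square)

lemma phi_p_zero [simp]: "phi_p p 0 = 0"
  by (simp add: phi_p_def)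

lemma phi_p_minus: "phi_p p (- x) = - phi_p p x"
  by (simp add: phi_p_def)

lemma phi_p_nonpos_eq: "x \<le> 0 \<Longrightarrow> phi_p p x = - ((- x) powr (p - 1))"
  using phi_p_nonneg_eq[of "- x" p] by (simp add: phi_p_minus)

lemma phi_p_nonneg_iff: "0 \<le> phi_p p x \<longleftrightarrow> 0 \<le> x"
  by (cases "0 \<le> x") (auto simp: phi_p_nonneg_eq phi_p_nonpos_eq)

lemma phi_p_nonpos_iff: "phi_p p x \<le> 0 \<longleftrightarrow> x \<le> 0"
  using phi_p_nonneg_iff[of p "- x"] by (simp add: phi_p_minus)

lemma phi_p_eq_0_iff: "phi_p p x = 0 \<longleftrightarrow> x = 0"
  using phi_p_nonneg_iff[of p x] phi_p_nonpos_iff[of p x] by linarith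

lemma le_root_mult_if_powr_le:
  fixes a b q A :: real
  assumes "0 < q" "0 \<le> a" "0 \<le> b" "0 \<le> A" "a powr q \<le> A * b powr q"
  shows "a \<le> A powr (1 / q) * b"
proof -
  have "a powr q \<le> (A powr (1 / q) * b) powr q"
    using assms by (simp add: powr_mult powr_powr)
  then show ?thesis
    using assms powr_less_mono2[of q "A powr (1 / q) * b" a] by (auto simp: not_le[symmetric])
qed

lemma increment_le_if_deriv_le:
  fixes W w' :: "real \<Rightarrow> real"
  assumes "a \<le> b" "continuous_on {a..b} W"
    and "\<And>t. a < t \<Longrightarrow> t < b \<Longrightarrow> (W has_real_derivative w' t) (at t)"
    and "\<And>t. a < t \<Longrightarrow> t < b \<Longrightarrow> w' t \<le> B"
  shows "W b - W a \<le> (b - a) * B"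
proof -
  have "(\<lambda>t. B * t - W t) a \<le> (\<lambda>t. B * t - W t) b"
  proof (rule DERIV_nonneg_imp_increasing_open[OF assms(1)])
    fix t assume t: "a < t" "t < b"
    show "\<exists>y. ((\<lambda>t. B * t - W t) has_real_derivative y) (at t) \<and> y \<ge> 0"
      using assms(3,4)[OF t] by (intro exI[of _ "B - w' t"]) (auto intro!: derivative_eq_intros)
  qed (use assms(2) in \<open>auto intro!: continuous_intros\<close>)
  then show ?thesis by (simp add: algebra_simps)
qed

lemma nonpos_if_deriv_le_mult:
  fixes u u' :: "real \<Rightarrow> real"
  assumes "a \<le> b" "continuous_on {a..b} u"
    and "\<And>t. a < t \<Longrightarrow> t < b \<Longrightarrow> (u has_real_derivative u' t) (at t)"
    and "\<And>t. a < t \<Longrightarrow> t < b \<Longrightarrow> u' t \<le> K * u t"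
    and "u a \<le> 0"
  shows "u b \<le> 0"
proof -
  have "exp (- K * b) * u b \<le> exp (- K * a) * u a"
  proof (rule DERIV_nonpos_imp_decreasing_open[OF assms(1)])
    fix t assume t: "a < t" "t < b"
    have "((\<lambda>t. exp (- K * t) * u t) has_real_derivative exp (- K * t) * (u' t - K * u t)) (at t)"
      using assms(3)[OF t] by (auto intro!: derivative_eq_intros simp: algebra_simps)
    moreover have "exp (- K * t) * (u' t - K * u t) \<le> 0"
      using assms(4)[OF t] by (simp add: mult_nonneg_nonpos)
    ultimately show "\<exists>y. ((\<lambda>t. exp (- K * t) * u t) has_real_derivative y) (at t) \<and> y \<le> 0"
      by blast
  qed (use assms(2) in \<open>auto intro!: continuous_intros\<close>)
  also have "\<dots> \<le> 0"
    using assms(5) by (simp add: mult_nonneg_nonpos)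
  finally show ?thesis
    by (simp add: mult_le_0_iff)
qed

lemma nonpos_if_neg_deriv_le_mult:
  fixes u u' :: "real \<Rightarrow> real"
  assumes "a \<le> b" "continuous_on {a..b} u"
    and "\<And>t. a < t \<Longrightarrow> t < b \<Longrightarrow> (u has_real_derivative u' t) (at t)"
    and "\<And>t. a < t \<Longrightarrow> t < b \<Longrightarrow> - u' t \<le> K * u t"
    and "u b \<le> 0"
  shows "u a \<le> 0"
proof -
  have "exp (K * a) * u a \<le> exp (K * b) * u b"
  proof (rule DERIV_nonneg_imp_increasing_open[OF assms(1)])
    fix t assume t: "a < t" "t < b"
    have "((\<lambda>t. exp (K * t) * u t) has_real_derivative exp (K * t) * (u' t + K * u t)) (at t)"
      using assms(3)[OF t] by (auto intro!: derivative_eq_intros simp: algebra_simps)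
    moreover have "0 \<le> exp (K * t) * (u' t + K * u t)"
      using assms(4)[OF t] by simp
    ultimately show "\<exists>y. ((\<lambda>t. exp (K * t) * u t) has_real_derivative y) (at t) \<and> y \<ge> 0"
      by blast
  qed (use assms(2) in \<open>auto intro!: continuous_intros\<close>)
  also have "\<dots> \<le> 0"
    using assms(5) by (simp add: mult_nonneg_nonpos)
  finally show ?thesis
    by (simp add: mult_le_0_iff)
qed

lemma less_near_if_continuous_on:
  fixes u :: "'a::metric_space \<Rightarrow> real"
  assumes "continuous_on S u" "r0 \<in> S" "u r0 < c"
  obtains e where "e > 0" "\<And>r. r \<in> S \<Longrightarrow> dist r r0 < e \<Longrightarrow> u r < c"
proof -
  have "(u \<longlongrightarrow> u r0) (at r0 within S)"
    using assms(1,2) by (simp add: continuous_on_def)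
  from order_tendstoD(2)[OF this assms(3)]
  obtain e where e: "e > 0" "\<And>r. r \<in> S \<Longrightarrow> r \<noteq> r0 \<Longrightarrow> dist r r0 < e \<Longrightarrow> u r < c"
    unfolding eventually_at by blast
  show thesis
  proof (rule that[OF e(1)])
    fix r assume "r \<in> S" "dist r r0 < e"
    then show "u r < c" using e(2) assms(3) by (cases "r = r0") auto
  qed
qed

lemma deriv_eq_0_at_min_on_Icc:
  fixes u :: "real \<Rightarrow> real"
  assumes "x \<in> {a<..<b}" "(u has_real_derivative l) (at x)" "\<And>y. y \<in> {a..b} \<Longrightarrow> u x \<le> u y"
  shows "l = 0"
proof (rule DERIV_local_min[OF assms(2)])
  show "0 < min (x - a) (b - x)" using assms(1) by simp
  show "\<forall>y. \<bar>x - y\<bar> < min (x - a) (b - x) \<longrightarrow> u x \<le> u y"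
    using assms(3) by (auto simp: abs_less_iff)
qed

lemma fhat_bounds_near_zero:
  fixes f :: "real \<Rightarrow> real"
  assumes "f 0 = 0" "\<And>s. 0 < s \<Longrightarrow> s < 1 \<Longrightarrow> f s < 0"
    and "((\<lambda>s. f s / s powr q) \<longlongrightarrow> L) (at_right 0)"
  obtains eta C where "0 < eta" "0 \<le> C"
    "\<And>s. s < eta \<Longrightarrow> 0 \<le> - fhat f s \<and> - fhat f s \<le> C * \<bar>s\<bar> powr q"
proof -
  have "eventually (\<lambda>s. - (\<bar>L\<bar> + 1) < f s / s powr q) (at_right 0)"
    using order_tendstoD(1)[OF assms(3)] by simp
  then obtain b where b: "0 < b" "\<And>s. 0 < s \<Longrightarrow> s < b \<Longrightarrow> - (\<bar>L\<bar> + 1) < f s / s powr q"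
    unfolding eventually_at_right_field by auto
  show thesis
  proof (rule that[of "min b 1" "\<bar>L\<bar> + 1"])
    fix s assume s: "s < min b 1"
    show "0 \<le> - fhat f s \<and> - fhat f s \<le> (\<bar>L\<bar> + 1) * \<bar>s\<bar> powr q"
    proof (cases "0 < s")
      case True
      then have "- (\<bar>L\<bar> + 1) * s powr q < f s"
        using b(2)[of s] s by (simp add: field_simps)
      then show ?thesis
        using True s assms(2)[of s] by (simp add: fhat_def algebra_simps)
    next
      case False
      then show ?thesis using assms(1) by (auto simp: fhat_def)
    qed
  qed (use b in auto)
qed

locale radial_p_laplacian =
  fixes p :: real and N :: nat and R1 R2 eta C :: real and g u u' w' W :: "real \<Rightarrow> real"
  defines W_def: "W \<equiv> \<lambda>t. t ^ (N - 1) * phi_p p (u' t)"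
  assumes p_gt_1: "1 < p"
    and R1_nonneg: "0 \<le> R1"
    and u_cont: "continuous_on {R1..R2} u"
    and u_deriv: "\<And>r. R1 < r \<Longrightarrow> r < R2 \<Longrightarrow> (u has_real_derivative u' r) (at r)"
    and W_cont: "continuous_on {R1..R2} W"
    and W_deriv: "\<And>r. R1 < r \<Longrightarrow> r < R2 \<Longrightarrow> (W has_real_derivative w' r) (at r)"
    and equation: "\<And>r. R1 < r \<Longrightarrow> r < R2 \<Longrightarrow> w' r = - (r ^ (N - 1) * g (u r))"
    and g_neg: "\<And>s. s < 0 \<Longrightarrow> g s = 0"
    and eta_pos: "0 < eta"
    and C_nonneg: "0 \<le> C"
    and g_near_zero: "\<And>s. s < eta \<Longrightarrow> 0 \<le> - g s \<and> - g s \<le> C * \<bar>s\<bar> powr (p - 1)"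
begin

lemma u_cont_sub: "R1 \<le> a \<Longrightarrow> b \<le> R2 \<Longrightarrow> continuous_on {a..b} u"
  using continuous_on_subset[OF u_cont] by auto

lemma W_cont_sub: "R1 \<le> a \<Longrightarrow> b \<le> R2 \<Longrightarrow> continuous_on {a..b} W"
  using continuous_on_subset[OF W_cont] by auto

lemma u_mono:
  assumes "R1 \<le> a" "a \<le> b" "b \<le> R2" "\<And>t. a < t \<Longrightarrow> t < b \<Longrightarrow> 0 \<le> u' t"
  shows "u a \<le> u b"
proof (rule DERIV_nonneg_imp_increasing_open[OF assms(2) _ u_cont_sub[OF assms(1,3)]])
  fix t assume "a < t" "t < b"
  then show "\<exists>y. (u has_real_derivative y) (at t) \<and> 0 \<le> y"
    using assms u_deriv[of t] by auto
qed

lemma u_antimono: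
  assumes "R1 \<le> a" "a \<le> b" "b \<le> R2" "\<And>t. a < t \<Longrightarrow> t < b \<Longrightarrow> u' t \<le> 0"
  shows "u b \<le> u a"
proof (rule DERIV_nonpos_imp_decreasing_open[OF assms(2) _ u_cont_sub[OF assms(1,3)]])
  fix t assume "a < t" "t < b"
  then show "\<exists>y. (u has_real_derivative y) (at t) \<and> y \<le> 0"
    using assms u_deriv[of t] by auto
qed

lemma W_mono:
  assumes "R1 \<le> a" "a \<le> b" "b \<le> R2" "\<And>t. a < t \<Longrightarrow> t < b \<Longrightarrow> 0 \<le> w' t"
  shows "W a \<le> W b"
proof (rule DERIV_nonneg_imp_increasing_open[OF assms(2) _ W_cont_sub[OF assms(1,3)]])
  fix t assume "a < t" "t < b"
  then show "\<exists>y. (W has_real_derivative y) (at t) \<and> 0 \<le> y"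
    using assms W_deriv[of t] by auto
qed

lemma u'_eq_0_if_W_eq_0: "0 < r \<Longrightarrow> W r = 0 \<Longrightarrow> u' r = 0"
  by (simp add: W_def phi_p_eq_0_iff)

lemma W_locally_const_where_neg:
  assumes r0: "r0 \<in> {R1..R2}" and neg: "u r0 < 0"
  shows "\<exists>e>0. \<forall>r\<in>{R1..R2}. dist r r0 < e \<longrightarrow> u r < 0 \<and> W r = W r0"
proof -
  obtain e where e: "e > 0" "\<And>r. r \<in> {R1..R2} \<Longrightarrow> dist r r0 < e \<Longrightarrow> u r < 0"
    using less_near_if_continuous_on[OF u_cont r0 neg] by blast
  have W_eq: "W b = W a" if "R1 \<le> a" "a \<le> b" "b \<le> R2" "dist a r0 < e" "dist b r0 < e" for a b
  proof (cases "a = b")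
    case False
    then show ?thesis
    proof (intro DERIV_isconst_end[of a b W] W_cont_sub)
      fix t assume t: "a < t" "t < b"
      then have "u t < 0"
        using that by (intro e(2)) (auto simp: dist_real_def)
      then show "(W has_real_derivative 0) (at t)"
        using W_deriv[of t] equation[of t] g_neg t that by auto
    qed (use that in auto)
  qed simp
  have "W r = W r0" if "r \<in> {R1..R2}" "dist r r0 < e" for r
    using W_eq[of r r0] W_eq[of r0 r] that r0 e(1) by (cases "r \<le> r0") auto
  then show ?thesis using e by blast
qed

lemma w'_bounds_near_zero:
  assumes r0: "r0 \<in> {R1..R2}" and zero: "u r0 = 0"
  obtains d where "d > 0"
    "\<And>t. R1 < t \<Longrightarrow> t < R2 \<Longrightarrow> dist t r0 < d \<Longrightarrow>
       0 \<le> w' t \<and> w' t \<le> C * t ^ (N - 1) * \<bar>u t\<bar> powr (p - 1)"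
proof -
  obtain d where d: "d > 0" "\<And>t. t \<in> {R1..R2} \<Longrightarrow> dist t r0 < d \<Longrightarrow> u t < eta"
    using less_near_if_continuous_on[OF u_cont r0, of eta] eta_pos zero by auto
  show thesis
  proof (rule that[OF d(1)])
    fix t assume t: "R1 < t" "t < R2" "dist t r0 < d"
    have G: "0 \<le> - g (u t)" "- g (u t) \<le> C * \<bar>u t\<bar> powr (p - 1)"
      using g_near_zero[of "u t"] d(2)[of t] t by auto
    have T: "0 \<le> t ^ (N - 1)"
      using t R1_nonneg by simp
    have "0 \<le> t ^ (N - 1) * - g (u t)"
      and "t ^ (N - 1) * - g (u t) \<le> t ^ (N - 1) * (C * \<bar>u t\<bar> powr (p - 1))"
      using mult_nonneg_nonneg[OF T G(1)] mult_left_mono[OF G(2) T] by simp_all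
    then show "0 \<le> w' t \<and> w' t \<le> C * t ^ (N - 1) * \<bar>u t\<bar> powr (p - 1)"
      using equation[OF t(1,2)] by (simp add: algebra_simps)
  qed
qed

lemma increasing_right_of_zero:
  assumes r0: "r0 \<in> {R1..R2}" and zero: "u r0 = 0" "W r0 = 0"
  obtains d where "0 < d"
    "\<And>t. R1 < t \<Longrightarrow> t < R2 \<Longrightarrow> dist t r0 < d \<Longrightarrow>
       0 \<le> w' t \<and> w' t \<le> C * t ^ (N - 1) * \<bar>u t\<bar> powr (p - 1)"
    "\<And>x. x \<in> {R1..R2} \<Longrightarrow> r0 < x \<Longrightarrow> x < r0 + d \<Longrightarrow> 0 \<le> u' x"
    "\<And>t x. x \<in> {R1..R2} \<Longrightarrow> r0 \<le> t \<Longrightarrow> t \<le> x \<Longrightarrow> x < r0 + d \<Longrightarrow> 0 \<le> u t \<and> u t \<le> u x"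
proof -
  obtain d where d: "0 < d" and w': "\<And>t. R1 < t \<Longrightarrow> t < R2 \<Longrightarrow> dist t r0 < d \<Longrightarrow>
      0 \<le> w' t \<and> w' t \<le> C * t ^ (N - 1) * \<bar>u t\<bar> powr (p - 1)"
    using w'_bounds_near_zero[OF r0 zero(1)] by blast
  have u'_nonneg: "0 \<le> u' x" if x: "x \<in> {R1..R2}" "r0 < x" "x < r0 + d" for x
  proof -
    have "0 < x ^ (N - 1)" using x r0 R1_nonneg by simp
    moreover have "0 \<le> W x"
      using W_mono[of r0 x] x r0 w' zero(2) by (force simp: dist_real_def)
    ultimately show ?thesis
      by (simp add: W_def zero_le_mult_iff phi_p_nonneg_iff)
  qed
  have "0 \<le> u t \<and> u t \<le> u x"
    if x: "x \<in> {R1..R2}" "r0 \<le> t" "t \<le> x" "x < r0 + d" for t x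
    using u_mono[of r0 t] u_mono[of t x] u'_nonneg zero x r0 by auto
  with that d w' u'_nonneg show thesis by blast
qed

lemma right_of_zero_bounds:
  assumes r0: "r0 \<in> {R1..R2}" and zero: "u r0 = 0" "W r0 = 0"
  obtains d K where "0 < d"
    "\<And>x. x \<in> {R1..R2} \<Longrightarrow> r0 < x \<Longrightarrow> x < r0 + d \<Longrightarrow> 0 \<le> u x \<and> 0 \<le> u' x \<and> u' x \<le> K * u x"
proof -
  define q where "q = p - 1"
  have q: "0 < q" using p_gt_1 by (simp add: q_def)
  obtain d where d: "0 < d"
    and w': "\<And>t. R1 < t \<Longrightarrow> t < R2 \<Longrightarrow> dist t r0 < d \<Longrightarrow>
      0 \<le> w' t \<and> w' t \<le> C * t ^ (N - 1) * \<bar>u t\<bar> powr q"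
    and u'_nonneg: "\<And>x. x \<in> {R1..R2} \<Longrightarrow> r0 < x \<Longrightarrow> x < r0 + d \<Longrightarrow> 0 \<le> u' x"
    and u_between: "\<And>t x. x \<in> {R1..R2} \<Longrightarrow> r0 \<le> t \<Longrightarrow> t \<le> x \<Longrightarrow> x < r0 + d \<Longrightarrow>
      0 \<le> u t \<and> u t \<le> u x"
    using increasing_right_of_zero[OF assms] unfolding q_def by blast
  define K where "K = (d * C) powr (1 / q)"
  have "0 \<le> u x \<and> 0 \<le> u' x \<and> u' x \<le> K * u x"
    if x: "x \<in> {R1..R2}" "r0 < x" "x < r0 + d" for x
  proof -
    have x_pos: "0 < x ^ (N - 1)" using x r0 R1_nonneg by simp
    have "W x - W r0 \<le> (x - r0) * (C * x ^ (N - 1) * u x powr q)"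
    proof (rule increment_le_if_deriv_le[OF _ W_cont_sub W_deriv])
      fix t assume t: "r0 < t" "t < x"
      then have "0 \<le> u t" "u t \<le> u x" using u_between[of x t] x by auto
      moreover have "0 \<le> t ^ (N - 1)" "t ^ (N - 1) \<le> x ^ (N - 1)"
        using t r0 R1_nonneg by (auto intro: power_mono)
      ultimately have "C * t ^ (N - 1) * \<bar>u t\<bar> powr q \<le> C * x ^ (N - 1) * u x powr q"
        using C_nonneg q by (auto intro!: mult_mono powr_mono2)
      then show "w' t \<le> C * x ^ (N - 1) * u x powr q"
        using w'[of t] t x r0 by (force simp: dist_real_def)
    qed (use x r0 in auto)
    also have "\<dots> \<le> d * (C * x ^ (N - 1) * u x powr q)"
      using x x_pos C_nonneg by (intro mult_right_mono) auto
    also have "\<dots> = x ^ (N - 1) * (d * C * u x powr q)"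
      by (simp add: algebra_simps)
    finally have "W x \<le> x ^ (N - 1) * (d * C * u x powr q)"
      using zero(2) by simp
    then have "x ^ (N - 1) * u' x powr q \<le> x ^ (N - 1) * (d * C * u x powr q)"
      using u'_nonneg[OF x] by (simp add: W_def phi_p_nonneg_eq q_def)
    then have "u' x powr q \<le> d * C * u x powr q"
      using x_pos by simp
    then have "u' x \<le> K * u x"
      unfolding K_def using le_root_mult_if_powr_le q u'_nonneg[OF x] u_between[of x x] x d C_nonneg
      by auto
    then show ?thesis using u'_nonneg[OF x] u_between[of x x] x by auto
  qed
  then show thesis using that d by blast
qed

lemma decreasing_left_of_zero:
  assumes r0: "r0 \<in> {R1..R2}" "R1 < r0" and zero: "u r0 = 0" "W r0 = 0"
  obtains d where "0 < d" "d \<le> r0 / 2"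
    "\<And>t. R1 < t \<Longrightarrow> t < R2 \<Longrightarrow> dist t r0 < d \<Longrightarrow>
       0 \<le> w' t \<and> w' t \<le> C * t ^ (N - 1) * \<bar>u t\<bar> powr (p - 1)"
    "\<And>x. x \<in> {R1..R2} \<Longrightarrow> r0 - d < x \<Longrightarrow> x < r0 \<Longrightarrow> u' x \<le> 0"
    "\<And>t x. x \<in> {R1..R2} \<Longrightarrow> r0 - d < x \<Longrightarrow> x \<le> t \<Longrightarrow> t \<le> r0 \<Longrightarrow> 0 \<le> u t \<and> u t \<le> u x"
proof -
  have r0_pos: "0 < r0" using r0 R1_nonneg by auto
  obtain d0 where d0: "0 < d0" and w': "\<And>t. R1 < t \<Longrightarrow> t < R2 \<Longrightarrow> dist t r0 < d0 \<Longrightarrow>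
      0 \<le> w' t \<and> w' t \<le> C * t ^ (N - 1) * \<bar>u t\<bar> powr (p - 1)"
    using w'_bounds_near_zero[OF r0(1) zero(1)] by blast
  define d where "d = min d0 (r0 / 2)"
  have d: "0 < d" "d \<le> d0" "d \<le> r0 / 2" using d0 r0_pos by (auto simp: d_def)
  have u'_nonpos: "u' x \<le> 0" if x: "x \<in> {R1..R2}" "r0 - d < x" "x < r0" for x
  proof -
    have "0 < x ^ (N - 1)" using x d r0_pos by simp
    moreover have "W x \<le> 0"
      using W_mono[of x r0] x r0 w' d zero(2) by (force simp: dist_real_def)
    ultimately show ?thesis
      by (simp add: W_def mult_le_0_iff phi_p_nonpos_iff)
  qed
  have "0 \<le> u t \<and> u t \<le> u x"
    if x: "x \<in> {R1..R2}" "r0 - d < x" "x \<le> t" "t \<le> r0" for t x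
    using u_antimono[of t r0] u_antimono[of x t] u'_nonpos zero x r0 by auto
  with that d w' u'_nonpos show thesis
    by (auto simp: dist_real_def)
qed

lemma left_of_zero_bounds:
  assumes r0: "r0 \<in> {R1..R2}" and zero: "u r0 = 0" "W r0 = 0"
  obtains d K where "0 < d"
    "\<And>x. x \<in> {R1..R2} \<Longrightarrow> r0 - d < x \<Longrightarrow> x < r0 \<Longrightarrow> 0 \<le> u x \<and> u' x \<le> 0 \<and> - u' x \<le> K * u x"
proof (cases "r0 = R1")
  case True
  then show thesis using that[of 1] by auto
next
  case False
  then have "R1 < r0" using r0 by auto
  define q where "q = p - 1"
  have q: "0 < q" using p_gt_1 by (simp add: q_def)
  obtain d where d: "0 < d" "d \<le> r0 / 2"
    and w': "\<And>t. R1 < t \<Longrightarrow> t < R2 \<Longrightarrow> dist t r0 < d \<Longrightarrow>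
      0 \<le> w' t \<and> w' t \<le> C * t ^ (N - 1) * \<bar>u t\<bar> powr q"
    and u'_nonpos: "\<And>x. x \<in> {R1..R2} \<Longrightarrow> r0 - d < x \<Longrightarrow> x < r0 \<Longrightarrow> u' x \<le> 0"
    and u_between: "\<And>t x. x \<in> {R1..R2} \<Longrightarrow> r0 - d < x \<Longrightarrow> x \<le> t \<Longrightarrow> t \<le> r0 \<Longrightarrow>
      0 \<le> u t \<and> u t \<le> u x"
    using decreasing_left_of_zero[OF r0 \<open>R1 < r0\<close> zero] unfolding q_def by blast
  define K where "K = (2 ^ (N - 1) * d * C) powr (1 / q)"
  have "0 \<le> u x \<and> u' x \<le> 0 \<and> - u' x \<le> K * u x"
    if x: "x \<in> {R1..R2}" "r0 - d < x" "x < r0" for x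
  proof -
    have x_pos: "0 < x ^ (N - 1)" using x d by simp
    have "W r0 - W x \<le> (r0 - x) * (C * r0 ^ (N - 1) * u x powr q)"
    proof (rule increment_le_if_deriv_le[OF _ W_cont_sub W_deriv])
      fix t assume t: "x < t" "t < r0"
      then have "0 \<le> u t" "u t \<le> u x" using u_between[of x t] x by auto
      moreover have "0 \<le> t ^ (N - 1)" "t ^ (N - 1) \<le> r0 ^ (N - 1)"
        using t x R1_nonneg by (auto intro: power_mono)
      ultimately have "C * t ^ (N - 1) * \<bar>u t\<bar> powr q \<le> C * r0 ^ (N - 1) * u x powr q"
        using C_nonneg q by (auto intro!: mult_mono powr_mono2)
      then show "w' t \<le> C * r0 ^ (N - 1) * u x powr q"
        using w'[of t] t x r0 by (force simp: dist_real_def)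
    qed (use x r0 in auto)
    also have "\<dots> \<le> d * (C * (2 ^ (N - 1) * x ^ (N - 1)) * u x powr q)"
    proof (intro mult_mono mult_right_mono mult_left_mono)
      \<comment> \<open>\<open>x > r0 - d \<ge> r0/2\<close> keeps the weight \<open>r0^(N-1)\<close> within a factor \<open>2^(N-1)\<close> of \<open>x^(N-1)\<close>.\<close>
      have "r0 ^ (N - 1) \<le> (2 * x) ^ (N - 1)"
        using x d r0 by (intro power_mono) auto
      then show "r0 ^ (N - 1) \<le> 2 ^ (N - 1) * x ^ (N - 1)"
        by (simp add: power_mult_distrib)
    qed (use x d r0 C_nonneg in auto)
    also have "\<dots> = x ^ (N - 1) * (2 ^ (N - 1) * d * C * u x powr q)"
      by (simp add: algebra_simps)
    finally have "- W x \<le> x ^ (N - 1) * (2 ^ (N - 1) * d * C * u x powr q)"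
      using zero(2) by simp
    then have "x ^ (N - 1) * (- u' x) powr q \<le> x ^ (N - 1) * (2 ^ (N - 1) * d * C * u x powr q)"
      using u'_nonpos[OF x] by (simp add: W_def phi_p_nonpos_eq q_def)
    then have "(- u' x) powr q \<le> 2 ^ (N - 1) * d * C * u x powr q"
      using x_pos by simp
    then have "- u' x \<le> K * u x"
      unfolding K_def using le_root_mult_if_powr_le q u'_nonpos[OF x] u_between[of x x] x d C_nonneg
      by auto
    then show ?thesis using u'_nonpos[OF x] u_between[of x x] x by auto
  qed
  then show thesis using that d by blast
qed

lemma vanishes_near_zero:
  assumes r0: "r0 \<in> {R1..R2}" and zero: "u r0 = 0" "W r0 = 0"
  shows "\<exists>e>0. \<forall>x\<in>{R1..R2}. dist x r0 < e \<longrightarrow> u x = 0 \<and> W x = 0"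
proof -
  obtain dr Kr where dr: "0 < dr" and right: "\<And>x. x \<in> {R1..R2} \<Longrightarrow> r0 < x \<Longrightarrow> x < r0 + dr \<Longrightarrow>
      0 \<le> u x \<and> 0 \<le> u' x \<and> u' x \<le> Kr * u x"
    using right_of_zero_bounds[OF assms] by blast
  obtain dl Kl where dl: "0 < dl" and left: "\<And>x. x \<in> {R1..R2} \<Longrightarrow> r0 - dl < x \<Longrightarrow> x < r0 \<Longrightarrow>
      0 \<le> u x \<and> u' x \<le> 0 \<and> - u' x \<le> Kl * u x"
    using left_of_zero_bounds[OF assms] by blast
  have "u x = 0 \<and> W x = 0" if x: "x \<in> {R1..R2}" "dist x r0 < min dr dl" for x
  proof (cases x r0 rule: linorder_cases)
    case greater
    have "u x \<le> 0"
    proof (rule nonpos_if_deriv_le_mult[of r0 x u u' Kr])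
      show "continuous_on {r0..x} u" using x r0 by (intro u_cont_sub) auto
      fix t assume t: "r0 < t" "t < x"
      then show "(u has_real_derivative u' t) (at t)" using x r0 by (intro u_deriv) auto
      show "u' t \<le> Kr * u t" using right[of t] t x r0 by (auto simp: dist_real_def)
    qed (use greater zero in auto)
    then show ?thesis
      using right[of x] x greater by (auto simp: W_def dist_real_def)
  next
    case less
    have "u x \<le> 0"
    proof (rule nonpos_if_neg_deriv_le_mult[of x r0 u u' Kl])
      show "continuous_on {x..r0} u" using x r0 by (intro u_cont_sub) auto
      fix t assume t: "x < t" "t < r0"
      then show "(u has_real_derivative u' t) (at t)" using x r0 by (intro u_deriv) auto
      show "- u' t \<le> Kl * u t" using left[of t] t x r0 by (auto simp: dist_real_def)
    qed (use less zero in auto)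
    then show ?thesis
      using left[of x] x less by (auto simp: W_def dist_real_def)
  qed (use zero in simp)
  then show ?thesis using dr dl by (intro exI[of _ "min dr dl"]) auto
qed

lemma nonpos_and_W_zero_locally:
  assumes r0: "r0 \<in> {R1..R2}" and "u r0 \<le> 0" "W r0 = 0"
  shows "\<exists>e>0. \<forall>x\<in>{R1..R2}. dist x r0 < e \<longrightarrow> u x \<le> 0 \<and> W x = 0"
proof (cases "u r0 = 0")
  case True
  then obtain e where "0 < e" "\<forall>x\<in>{R1..R2}. dist x r0 < e \<longrightarrow> u x = 0 \<and> W x = 0"
    using vanishes_near_zero[OF r0 True assms(3)] by blast
  then show ?thesis by (intro exI[of _ e]) auto
next
  case False
  then obtain e where "0 < e" "\<forall>x\<in>{R1..R2}. dist x r0 < e \<longrightarrow> u x < 0 \<and> W x = W r0"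
    using W_locally_const_where_neg[OF r0] assms(2) by force
  then show ?thesis using assms(3) by (intro exI[of _ e]) auto
qed

lemma nonpos_and_W_zero_everywhere:
  assumes "r0 \<in> {R1..R2}" "u r0 \<le> 0" "W r0 = 0"
  shows "\<forall>x\<in>{R1..R2}. u x \<le> 0 \<and> W x = 0"
proof -
  define T where "T = {x \<in> {R1..R2}. u x \<le> 0 \<and> W x = 0}"
  have "openin (top_of_set {R1..R2}) T"
    unfolding openin_euclidean_subtopology_iff
  proof (intro conjI ballI)
    fix x assume "x \<in> T"
    then obtain e where "0 < e" "\<forall>y\<in>{R1..R2}. dist y x < e \<longrightarrow> u y \<le> 0 \<and> W y = 0"
      using nonpos_and_W_zero_locally[of x] by (auto simp: T_def)
    then show "\<exists>e>0. \<forall>y\<in>{R1..R2}. dist y x < e \<longrightarrow> y \<in> T"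
      by (auto simp: T_def)
  qed (auto simp: T_def)
  moreover have "closedin (top_of_set {R1..R2}) T"
  proof -
    have "T = ({R1..R2} \<inter> u -` {..0}) \<inter> ({R1..R2} \<inter> W -` {0})"
      by (auto simp: T_def)
    then show ?thesis
      using continuous_closedin_preimage[OF u_cont closed_atMost]
        continuous_closedin_preimage[OF W_cont closed_singleton] by auto
  qed
  moreover have "r0 \<in> T" using assms by (simp add: T_def)
  ultimately have "T = {R1..R2}"
    using connected_clopen[THEN iffD1, OF connected_Icc] by blast
  then show ?thesis by (auto simp: T_def)
qed

lemma constant_if_nonpos_critical_point:
  assumes "r0 \<in> {R1..R2}" "u r0 \<le> 0" "W r0 = 0"
  shows "\<exists>c\<ge>0. \<forall>x\<in>{R1..R2}. u x = - c"
proof -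
  have everywhere: "\<forall>x\<in>{R1..R2}. u x \<le> 0 \<and> W x = 0"
    using nonpos_and_W_zero_everywhere[OF assms] .
  have const: "u x = u R1" if x: "x \<in> {R1..R2}" for x
  proof (cases "x = R1")
    case False
    then have "R1 < x" using x by simp
    then show ?thesis
    proof (rule DERIV_isconst_end[OF _ u_cont_sub])
      fix t assume t: "R1 < t" "t < x"
      then have "W t = 0" using everywhere[rule_format, of t] x by simp
      then have "u' t = 0"
        using t R1_nonneg by (intro u'_eq_0_if_W_eq_0) auto
      then show "(u has_real_derivative 0) (at t)"
        using u_deriv[of t] t x by simp
    qed (use x in simp_all)
  qed simp
  have "u R1 \<le> 0" using everywhere[rule_format, of R1] assms(1) by simp
  then show ?thesis
  proof (intro exI[of _ "- u R1"] conjI ballI)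
    fix x assume "x \<in> {R1..R2}"
    from const[OF this] show "u x = - (- u R1)" by simp
  qed simp
qed


lemma constant_or_positive:
  assumes "R1 < R2" "u' R1 = 0" "u' R2 = 0"
  shows "(\<exists>c\<ge>0. \<forall>r\<in>{R1..R2}. u r = - c) \<or> (\<forall>r\<in>{R1..R2}. 0 < u r)"
proof -
  obtain rm where rm: "rm \<in> {R1..R2}" "\<And>r. r \<in> {R1..R2} \<Longrightarrow> u rm \<le> u r"
    using continuous_attains_inf[OF compact_Icc _ u_cont] assms(1) by auto
  show ?thesis
  proof (cases "0 < u rm")
    case True
    then show ?thesis using rm(2) by force
  next
    case False
    have "u' rm = 0"
    proof (cases "rm = R1 \<or> rm = R2")
      case False
      then have "rm \<in> {R1<..<R2}" using rm(1) by auto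
      then show ?thesis
        using deriv_eq_0_at_min_on_Icc[of rm R1 R2 u] u_deriv rm(2) by auto
    qed (use assms(2,3) in auto)
    then show ?thesis
      using constant_if_nonpos_critical_point[OF rm(1)] False by (simp add: W_def)
  qed
qed

end

lemma radial_solution_imp_radial_p_laplacian:
  assumes sol: "radial_solution p N f R1 R2 u"
    and "1 < p" "0 \<le> R1" "0 < eta" "0 \<le> C"
    and "\<And>s. s < eta \<Longrightarrow> 0 \<le> - fhat f s \<and> - fhat f s \<le> C * \<bar>s\<bar> powr (p - 1)"
  obtains u' w' where "radial_p_laplacian p N R1 R2 eta C (fhat f) u u' w'" "u' R1 = 0" "u' R2 = 0"
proof -
  obtain u' w' where
    du: "\<And>r. r \<in> {R1..R2} \<Longrightarrow> (u has_real_derivative u' r) (at r within {R1..R2})" and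
    dW: "\<And>r. r \<in> {R1..R2} \<Longrightarrow>
      ((\<lambda>t. t ^ (N - 1) * phi_p p (u' t)) has_real_derivative w' r) (at r within {R1..R2})" and
    eq: "\<And>r. r \<in> {R1<..<R2} \<Longrightarrow> - w' r = r ^ (N - 1) * fhat f (u r)" and
    bc: "u' R1 = 0" "u' R2 = 0"
    using sol unfolding radial_solution_def by blast
  have "radial_p_laplacian p N R1 R2 eta C (fhat f) u u' w'"
  proof unfold_locales
    show "continuous_on {R1..R2} u"
      using du by (intro DERIV_continuous_on) blast
    show "continuous_on {R1..R2} (\<lambda>t. t ^ (N - 1) * phi_p p (u' t))"
      using dW by (intro DERIV_continuous_on) blast
    show "(u has_real_derivative u' r) (at r)" if "R1 < r" "r < R2" for r
      using du[of r] at_within_Icc_at[of R1 r R2] that by simp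
    show "((\<lambda>t. t ^ (N - 1) * phi_p p (u' t)) has_real_derivative w' r) (at r)"
      if "R1 < r" "r < R2" for r
      using dW[of r] at_within_Icc_at[of R1 r R2] that by simp
    show "w' r = - (r ^ (N - 1) * fhat f (u r))" if "R1 < r" "r < R2" for r
      using eq[of r] that by simp
  qed (use assms(2-6) in \<open>auto simp: fhat_def\<close>)
  then show thesis by (rule that[OF _ bc])
qed

theorem lemma2p1:
  fixes p R1 R2 :: real and N :: nat and f u :: "real \<Rightarrow> real"
  assumes p: "1 < p"
    and N: "N \<ge> 1"
    and R: "0 \<le> R1" "R1 < R2"
    and f_cont: "continuous_on {0..} f"
    and f_C1: "\<exists>f'. (\<forall>s>0. (f has_real_derivative f' s) (at s)) \<and> continuous_on {0<..} f'"
    and f_eq: "f 0 = 0" "f 1 = 0" "\<And>s. 0 < s \<Longrightarrow> s < 1 \<Longrightarrow> f s < 0" "\<And>s. s > 1 \<Longrightarrow> f s > 0"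
    and f_0: "\<exists>C0\<ge>0. ((\<lambda>s. f s / s powr (p - 1)) \<longlongrightarrow> - C0) (at_right 0)"
    and f_1: "\<exists>C1::ereal. C1 \<ge> 0 \<and> ((\<lambda>s. ereal (f s / (\<bar>s - 1\<bar> powr (p - 2) * (s - 1)))) \<longlongrightarrow> C1) (at 1)"
    and sol: "radial_solution p N f R1 R2 u"
  shows "(\<exists>C\<ge>0. \<forall>r\<in>{R1..R2}. u r = - C) \<or> (\<forall>r\<in>{R1..R2}. u r > 0)"
  \<comment> \<open>Only \<open>f 0 = 0\<close>, the sign of \<open>f\<close> on \<open>(0,1)\<close> and \<open>(f_0)\<close> are needed.\<close>
proof -
  obtain C0 where C0: "((\<lambda>s. f s / s powr (p - 1)) \<longlongrightarrow> - C0) (at_right 0)"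
    using f_0 by blast
  obtain eta C where eta_C: "0 < eta" "0 \<le> C"
    "\<And>s. s < eta \<Longrightarrow> 0 \<le> - fhat f s \<and> - fhat f s \<le> C * \<bar>s\<bar> powr (p - 1)"
    using fhat_bounds_near_zero[of f, OF f_eq(1) f_eq(3) C0] by blast
  obtain u' w' where "radial_p_laplacian p N R1 R2 eta C (fhat f) u u' w'" "u' R1 = 0" "u' R2 = 0"
    using radial_solution_imp_radial_p_laplacian[OF sol p R(1) eta_C] by blast
  then show ?thesis
    by (rule radial_p_laplacian.constant_or_positive[OF _ R(2)])
qed

end
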